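(* Let $\pi:(X,T)\to(Y,T)$ be an almost one-to-one (respectively proximal, equicontinuous, distal) extension between minimal systems. Then for every $d\in\mathbb{N}$, $\pi^{(d)}:(N_d(X),\mathcal{G}_d(T))\to(N_d(Y),\mathcal{G}_d(T))$ is also almost one-to-one (respectively proximal, equicontinuous, distal).
   Context: $\pi^{(d)}=\pi\times\cdots\times\pi$; $N_d(X)=\overline{\{(T^{p+q}x,\dots,T^{p+dq}x)\}}$; $\mathcal{G}_d(T)=\langle T\times\cdots\times T,\ T\times T^2\times\cdots\times T^d\rangle$. For an extension $\phi:(X,G)\to(Y,G)$ with $R_\phi=\{(x,x'):\phi(x)=\phi(x')\}$: almost one-to-one means some fibre is a singleton; proximal means every pair in $R_\phi$ satisfies $\inf_g\rho(gx,gx')=0$; distal means no pair of distinct points of $R_\phi$ is proximal; equicontinuous means for every $\varepsilon>0$ there is $\delta>0$ with $\sup_g\rho(gx,gx')<\varepsilon$ whenever $(x,x')\in R_\phi$, $\rho(x,x')<\delta$. *)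

theory Defs
  imports "HOL-Analysis.Analysis" "HOL-Library.FuncSet"
begin

definition zit :: "('a \<Rightarrow> 'a) \<Rightarrow> ('a \<Rightarrow> 'a) \<Rightarrow> int \<Rightarrow> 'a \<Rightarrow> 'a" where
  "zit T Ti n = (if n \<ge> 0 then T ^^ nat n else Ti ^^ nat (- n))"

text \<open>Max metric on d-tuples (x_1,...,x_d), represented as extensional functions on {1..d}.\<close>
definition maxdist_d :: "nat \<Rightarrow> ('b \<Rightarrow> 'b \<Rightarrow> real) \<Rightarrow> (nat \<Rightarrow> 'b) \<Rightarrow> (nat \<Rightarrow> 'b) \<Rightarrow> real" where
  "maxdist_d d \<rho> x y = Max ((\<lambda>i. \<rho> (x i) (y i)) ` {1..d})"

text \<open>N_d(X): closure in X^d of {(T^(p+q)x, ..., T^(p+dq)x) : x in X, p,q in Z}.\<close>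
definition Nd :: "nat \<Rightarrow> 'a::metric_space set \<Rightarrow> ('a \<Rightarrow> 'a) \<Rightarrow> ('a \<Rightarrow> 'a) \<Rightarrow> (nat \<Rightarrow> 'a) set" where
  "Nd d X T Ti = {z \<in> PiE {1..d} (\<lambda>_. X). \<forall>e>0. \<exists>x\<in>X. \<exists>p q::int.
      maxdist_d d dist z (\<lambda>i\<in>{1..d}. zit T Ti (p + int i * q) x) < e}"

text \<open>The action of G_d(T): (a,b) acts as (T x ... x T)^a (T x T^2 x ... x T^d)^b.\<close>
definition Gd_act :: "nat \<Rightarrow> ('a \<Rightarrow> 'a) \<Rightarrow> ('a \<Rightarrow> 'a) \<Rightarrow> int \<times> int \<Rightarrow> (nat \<Rightarrow> 'a) \<Rightarrow> (nat \<Rightarrow> 'a)" where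
  "Gd_act d T Ti = (\<lambda>(a, b) z. \<lambda>i\<in>{1..d}. zit T Ti (a + int i * b) (z i))"

definition prod_map :: "nat \<Rightarrow> ('a \<Rightarrow> 'b) \<Rightarrow> (nat \<Rightarrow> 'a) \<Rightarrow> (nat \<Rightarrow> 'b)" where
  "prod_map d \<pi> = (\<lambda>z. \<lambda>i\<in>{1..d}. \<pi> (z i))"

definition cont_wrt :: "('a \<Rightarrow> 'a \<Rightarrow> real) \<Rightarrow> ('b \<Rightarrow> 'b \<Rightarrow> real) \<Rightarrow> 'a set \<Rightarrow> ('a \<Rightarrow> 'b) \<Rightarrow> bool" where
  "cont_wrt \<rho>1 \<rho>2 Z f = (\<forall>x\<in>Z. \<forall>e>0. \<exists>\<delta>>0. \<forall>x'\<in>Z. \<rho>1 x x' < \<delta> \<longrightarrow> \<rho>2 (f x) (f x') < e)"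

definition is_extension where
  "is_extension \<rho>1 \<rho>2 Z1 Z2 I act1 act2 \<phi> =
     (\<phi> ` Z1 = Z2 \<and> cont_wrt \<rho>1 \<rho>2 Z1 \<phi> \<and>
      (\<forall>g\<in>I. \<forall>x\<in>Z1. \<phi> (act1 g x) = act2 g (\<phi> x)))"

definition minimal_sys :: "('a \<Rightarrow> 'a \<Rightarrow> real) \<Rightarrow> 'a set \<Rightarrow> 'g set \<Rightarrow> ('g \<Rightarrow> 'a \<Rightarrow> 'a) \<Rightarrow> bool" where
  "minimal_sys \<rho> Z I act = (Z \<noteq> {} \<and> (\<forall>x\<in>Z. \<forall>z\<in>Z. \<forall>e>0. \<exists>g\<in>I. \<rho> (act g x) z < e))"

definition almost_one_one :: "'a set \<Rightarrow> ('a \<Rightarrow> 'b) \<Rightarrow> bool" where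
  "almost_one_one Z \<phi> = (\<exists>x\<in>Z. \<forall>x'\<in>Z. \<phi> x' = \<phi> x \<longrightarrow> x' = x)"

definition proximal_pair :: "('a \<Rightarrow> 'a \<Rightarrow> real) \<Rightarrow> 'g set \<Rightarrow> ('g \<Rightarrow> 'a \<Rightarrow> 'a) \<Rightarrow> 'a \<Rightarrow> 'a \<Rightarrow> bool" where
  "proximal_pair \<rho> I act x x' = ((INF g\<in>I. \<rho> (act g x) (act g x')) = 0)"

definition proximal_ext where
  "proximal_ext \<rho> Z I act \<phi> =
     (\<forall>x\<in>Z. \<forall>x'\<in>Z. \<phi> x = \<phi> x' \<longrightarrow> proximal_pair \<rho> I act x x')"

definition distal_ext where
  "distal_ext \<rho> Z I act \<phi> =
     (\<forall>x\<in>Z. \<forall>x'\<in>Z. \<phi> x = \<phi> x' \<and> x \<noteq> x' \<longrightarrow> \<not> proximal_pair \<rho> I act x x')"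

definition equicont_ext where
  "equicont_ext \<rho> Z I act \<phi> =
     (\<forall>e>0. \<exists>\<delta>>0. \<forall>x\<in>Z. \<forall>x'\<in>Z. \<phi> x = \<phi> x' \<and> \<rho> x x' < \<delta> \<longrightarrow>
        (SUP g\<in>I. \<rho> (act g x) (act g x')) < e)"

end

theory Submission
  imports Defs
begin

text \<open>
  The factor map \<pi>^(d) commutes coordinatewise with the generators of G_d(T), and a
  point of N_d is a coordinatewise limit of tuples (T^(p+q)x, ..., T^(p+dq)x); passing to a
  convergent subsequence in the compact space X shows that \<pi>^(d) maps N_d(X) onto N_d(Y).
  Over a singleton fibre {x} lies the singleton fibre of the diagonal point (x, ..., x), and
  distality and equicontinuity pass to tuples one coordinate at a time. For proximality one
  needs finitely many pairs of a fibre to be proximal at a common time: make the last pair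
  close along times n_k, pass to a limit where that pair becomes diagonal, apply induction
  to the limit pairs (still in fibres of \<pi>) and pull back along the n_k by continuity.
\<close>

section \<open>Integer iterates of a homeomorphism\<close>

lemma funpow_in_set: "f ` X \<subseteq> X \<Longrightarrow> x \<in> X \<Longrightarrow> (f ^^ n) x \<in> X"
  by (induct n) auto

lemma continuous_on_funpow:
  assumes "continuous_on X f" and "f ` X \<subseteq> X"
  shows "continuous_on X (f ^^ n)"
proof (induct n)
  case (Suc n)
  have "continuous_on ((f ^^ n) ` X) f"
    using assms funpow_in_set[OF assms(2)] by (blast intro: continuous_on_subset)
  then show ?case
    using Suc continuous_on_compose[of X "f ^^ n" f] by simp
qed simp

lemma zit_in: "homeomorphism X X T Ti \<Longrightarrow> x \<in> X \<Longrightarrow> zit T Ti n x \<in> X"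
  unfolding zit_def homeomorphism_def by (auto intro!: funpow_in_set)

lemma continuous_on_zit: "homeomorphism X X T Ti \<Longrightarrow> continuous_on X (zit T Ti n)"
  unfolding zit_def homeomorphism_def by (auto intro!: continuous_on_funpow)

lemma zit_0 [simp]: "zit T Ti 0 = id"
  unfolding zit_def by simp

lemma zit_Suc:
  assumes h: "homeomorphism X X T Ti" and x: "x \<in> X"
  shows "zit T Ti (n + 1) x = T (zit T Ti n x)"
proof (cases "n \<ge> 0")
  case True
  then have "nat (n + 1) = Suc (nat n)" by simp
  with True show ?thesis unfolding zit_def by simp
next
  case False
  then have "nat (- n) = Suc (nat (- (n + 1)))" by simp
  moreover have "(Ti ^^ nat (- (n + 1))) x \<in> X"
    using h x unfolding homeomorphism_def by (auto intro!: funpow_in_set)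
  ultimately show ?thesis
    using False h unfolding zit_def homeomorphism_def by simp
qed

lemma zit_pred:
  assumes h: "homeomorphism X X T Ti" and x: "x \<in> X"
  shows "zit T Ti (n - 1) x = Ti (zit T Ti n x)"
  using zit_Suc[OF h x, of "n - 1"] zit_in[OF h x, of "n - 1"] h
  unfolding homeomorphism_def by simp

lemma zit_add:
  assumes h: "homeomorphism X X T Ti" and x: "x \<in> X"
  shows "zit T Ti (m + n) x = zit T Ti m (zit T Ti n x)"
proof (induct m rule: int_induct[where k = 0])
  case (step1 i)
  have "zit T Ti (i + 1 + n) x = T (zit T Ti (i + n) x)"
    using zit_Suc[OF h x, of "i + n"] by (simp add: ac_simps)
  then show ?case
    using step1(2) zit_Suc[OF h zit_in[OF h x]] by simp
next
  case (step2 i)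
  have "zit T Ti (i - 1 + n) x = Ti (zit T Ti (i + n) x)"
    using zit_pred[OF h x, of "i + n"] by (simp add: algebra_simps)
  then show ?case
    using step2(2) zit_pred[OF h zit_in[OF h x]] by simp
qed simp

section \<open>Proximality\<close>

lemma proximal_pair_iff:
  fixes \<rho> :: "'a \<Rightarrow> 'a \<Rightarrow> real"
  assumes I: "I \<noteq> {}" and nonneg: "\<And>g. g \<in> I \<Longrightarrow> 0 \<le> \<rho> (act g x) (act g x')"
  shows "proximal_pair \<rho> I act x x' \<longleftrightarrow> (\<forall>e>0. \<exists>g\<in>I. \<rho> (act g x) (act g x') < e)"
proof -
  let ?f = "\<lambda>g. \<rho> (act g x) (act g x')"
  have bdd: "bdd_below (?f ` I)"
    using nonneg by (intro bdd_belowI2) auto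
  have "0 \<le> (INF g\<in>I. ?f g)"
    using I nonneg by (intro cINF_greatest) auto
  then have "(INF g\<in>I. ?f g) = 0 \<longleftrightarrow> (\<forall>e>0. (INF g\<in>I. ?f g) < e)"
    by (metis less_irrefl order.not_eq_order_implies_strict)
  then show ?thesis
    unfolding proximal_pair_def using cINF_less_iff[OF I bdd] by simp
qed

definition simultaneously_proximal ::
    "('g \<Rightarrow> 'a::metric_space \<Rightarrow> 'a) \<Rightarrow> 'i set \<Rightarrow> ('i \<Rightarrow> 'a) \<Rightarrow> ('i \<Rightarrow> 'a) \<Rightarrow> bool" where
  "simultaneously_proximal act S z z' \<longleftrightarrow>
     (\<forall>e>0. \<exists>g. \<forall>i\<in>S. dist (act g (z i)) (act g (z' i)) < e)"

lemma simultaneously_proximal_if_orbit_limit: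
  fixes act :: "'g::plus \<Rightarrow> 'a::metric_space \<Rightarrow> 'a"
  assumes S: "finite S"
    and act_in: "\<And>g x. x \<in> X \<Longrightarrow> act g x \<in> X"
    and act_cont: "\<And>g. continuous_on X (act g)"
    and act_add: "\<And>g h x. x \<in> X \<Longrightarrow> act (g + h) x = act g (act h x)"
    and z: "\<And>i. i \<in> S \<Longrightarrow> z i \<in> X \<and> z' i \<in> X"
    and u: "\<And>i. i \<in> S \<Longrightarrow> u i \<in> X \<and> u' i \<in> X"
    and lim: "\<And>i. i \<in> S \<Longrightarrow> (\<lambda>k. act (N k) (z i)) \<longlonglongrightarrow> u i \<and> (\<lambda>k. act (N k) (z' i)) \<longlonglongrightarrow> u' i"
    and prox: "simultaneously_proximal act S u u'"
  shows "simultaneously_proximal act S z z'"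
  unfolding simultaneously_proximal_def
proof (intro allI impI)
  fix e :: real
  assume "e > 0"
  then have e3: "e / 3 > 0" by simp
  then obtain m where m: "\<forall>i\<in>S. dist (act m (u i)) (act m (u' i)) < e / 3"
    using prox unfolding simultaneously_proximal_def by blast
  have "(\<lambda>k. act m (act (N k) (z i))) \<longlonglongrightarrow> act m (u i) \<and>
      (\<lambda>k. act m (act (N k) (z' i))) \<longlonglongrightarrow> act m (u' i)" if "i \<in> S" for i
    using lim[OF that] u[OF that] z[OF that] act_in
    by (auto intro!: continuous_on_tendsto_compose[OF act_cont])
  then have "\<forall>\<^sub>F k in sequentially. \<forall>i\<in>S. dist (act m (act (N k) (z i))) (act m (u i)) < e / 3 \<and>
      dist (act m (act (N k) (z' i))) (act m (u' i)) < e / 3"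
    using e3 by (intro eventually_ball_finite[OF S] ballI eventually_conj tendstoD) auto
  then obtain k where k: "\<forall>i\<in>S. dist (act m (act (N k) (z i))) (act m (u i)) < e / 3 \<and>
      dist (act m (act (N k) (z' i))) (act m (u' i)) < e / 3"
    unfolding eventually_sequentially by blast
  have "dist (act (m + N k) (z i)) (act (m + N k) (z' i)) < e" if i: "i \<in> S" for i
  proof -
    have "dist (act (m + N k) (z i)) (act (m + N k) (z' i)) =
        dist (act m (act (N k) (z i))) (act m (act (N k) (z' i)))"
      using act_add z i by simp
    also have "\<dots> \<le> dist (act m (act (N k) (z i))) (act m (u i)) + dist (act m (u i)) (act m (u' i))
        + dist (act m (act (N k) (z' i))) (act m (u' i))"
      using dist_triangle[of "act m (act (N k) (z i))" "act m (act (N k) (z' i))" "act m (u i)"]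
        dist_triangle[of "act m (u i)" "act m (act (N k) (z' i))" "act m (u' i)"]
        dist_commute[of "act m (u' i)" "act m (act (N k) (z' i))"]
      by linarith
    finally show ?thesis
      using k m i by fastforce
  qed
  then show "\<exists>g. \<forall>i\<in>S. dist (act g (z i)) (act g (z' i)) < e"
    by blast
qed

section \<open>Tuples and the orbit closure N_d\<close>

lemma maxdist_d_less_iff:
  "d \<ge> 1 \<Longrightarrow> maxdist_d d \<rho> x y < e \<longleftrightarrow> (\<forall>i\<in>{1..d}. \<rho> (x i) (y i) < e)"
  unfolding maxdist_d_def by (subst Max_less_iff) auto

lemma maxdist_d_le_iff:
  "d \<ge> 1 \<Longrightarrow> maxdist_d d \<rho> x y \<le> e \<longleftrightarrow> (\<forall>i\<in>{1..d}. \<rho> (x i) (y i) \<le> e)"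
  unfolding maxdist_d_def by (subst Max_le_iff) auto

lemma maxdist_d_nonneg: "d \<ge> 1 \<Longrightarrow> 0 \<le> maxdist_d d dist x y"
  unfolding maxdist_d_def
  by (rule order_trans[OF zero_le_dist Max_ge[of _ "dist (x 1) (y 1)"]]) auto

lemma Gd_act_apply: "i \<in> {1..d} \<Longrightarrow> Gd_act d T Ti (a, b) z i = zit T Ti (a + int i * b) (z i)"
  unfolding Gd_act_def by simp

lemma prod_map_apply: "i \<in> {1..d} \<Longrightarrow> prod_map d \<pi> z i = \<pi> (z i)"
  unfolding prod_map_def by simp

lemma LIMSEQ_dist_less_1_over_Suc:
  "(\<And>k. dist (f k) l < 1 / real (Suc k)) \<Longrightarrow> f \<longlonglongrightarrow> l"
  by (rule tendsto_dist_iff[THEN iffD2], rule LIMSEQ_norm_0) simp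

lemma compact_common_convergent_subseq:
  fixes w :: "nat \<Rightarrow> 'i \<Rightarrow> 'a::metric_space"
  assumes X: "compact X" and S: "finite S" and w: "\<And>k i. i \<in> S \<Longrightarrow> w k i \<in> X"
  shows "\<exists>r c. strict_mono r \<and> (\<forall>i\<in>S. c i \<in> X \<and> (\<lambda>k. w (r k) i) \<longlonglongrightarrow> c i)"
  using S w
proof (induct S arbitrary: w rule: finite_induct)
  case empty
  show ?case by (rule exI[of _ id]) (auto simp: strict_mono_def)
next
  case (insert a S)
  then obtain r c where r: "strict_mono r" and c: "\<forall>i\<in>S. c i \<in> X \<and> (\<lambda>k. w (r k) i) \<longlonglongrightarrow> c i"
    by blast
  obtain l r' where l: "l \<in> X" and r': "strict_mono r'" and lim: "((\<lambda>k. w (r k) a) \<circ> r') \<longlonglongrightarrow> l"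
    using seq_compactE[OF compact_imp_seq_compact[OF X], of "\<lambda>k. w (r k) a"] insert.prems by blast
  have "(\<lambda>k. w (r (r' k)) i) \<longlonglongrightarrow> c i" if "i \<in> S" for i
    using LIMSEQ_subseq_LIMSEQ[OF _ r'] c that by (auto simp: o_def)
  then have "\<forall>i\<in>insert a S. (c(a := l)) i \<in> X \<and> (\<lambda>k. w ((r \<circ> r') k) i) \<longlonglongrightarrow> (c(a := l)) i"
    using c l lim by (auto simp: o_def)
  then show ?case
    using strict_mono_o[OF r r'] by blast
qed

lemma mem_Nd_iff_tendsto:
  assumes d: "d \<ge> 1"
  shows "z \<in> Nd d X T Ti \<longleftrightarrow> z \<in> PiE {1..d} (\<lambda>_. X) \<and>
    (\<exists>x p q. (\<forall>k. x k \<in> X) \<and>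
      (\<forall>i\<in>{1..d}. (\<lambda>k. zit T Ti (p k + int i * q k) (x k)) \<longlonglongrightarrow> z i))"
  (is "_ \<longleftrightarrow> _ \<and> (\<exists>x p q. ?approx x p q)")
proof
  assume z: "z \<in> Nd d X T Ti"
  then have "\<exists>x\<in>X. \<exists>p q. maxdist_d d dist z (\<lambda>i\<in>{1..d}. zit T Ti (p + int i * q) x) < 1 / real (Suc k)"
    for k unfolding Nd_def by simp
  then obtain x p q where "\<forall>k. x k \<in> X \<and>
      maxdist_d d dist z (\<lambda>i\<in>{1..d}. zit T Ti (p k + int i * q k) (x k)) < 1 / real (Suc k)"
    by metis
  then have "?approx x p q"
    using d by (auto simp: maxdist_d_less_iff dist_commute intro!: LIMSEQ_dist_less_1_over_Suc)
  with z show "z \<in> PiE {1..d} (\<lambda>_. X) \<and> (\<exists>x p q. ?approx x p q)"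
    unfolding Nd_def by blast
next
  assume "z \<in> PiE {1..d} (\<lambda>_. X) \<and> (\<exists>x p q. ?approx x p q)"
  then obtain x p q where z: "z \<in> PiE {1..d} (\<lambda>_. X)" and "?approx x p q" by blast
  have "\<exists>y\<in>X. \<exists>p q. maxdist_d d dist z (\<lambda>i\<in>{1..d}. zit T Ti (p + int i * q) y) < e"
    if "e > 0" for e
  proof -
    have "\<forall>\<^sub>F k in sequentially. \<forall>i\<in>{1..d}. dist (zit T Ti (p k + int i * q k) (x k)) (z i) < e"
      using \<open>?approx x p q\<close> that by (intro eventually_ball_finite) (auto intro: tendstoD)
    then obtain k where "\<forall>i\<in>{1..d}. dist (zit T Ti (p k + int i * q k) (x k)) (z i) < e"
      unfolding eventually_sequentially by blast
    then show ?thesis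
      using \<open>?approx x p q\<close> d by (auto simp: maxdist_d_less_iff dist_commute)
  qed
  with z show "z \<in> Nd d X T Ti"
    unfolding Nd_def by blast
qed

lemma Nd_subset_PiE: "Nd d X T Ti \<subseteq> PiE {1..d} (\<lambda>_. X)"
  unfolding Nd_def by blast

lemma diagonal_in_Nd: "d \<ge> 1 \<Longrightarrow> x \<in> X \<Longrightarrow> (\<lambda>i\<in>{1..d}. x) \<in> Nd d X T Ti"
  unfolding Nd_def by (auto simp: maxdist_d_less_iff intro!: bexI[of _ x] exI[of _ "0::int"])

section \<open>Coordinatewise properties of product extensions\<close>

lemma proximal_pair_Gd_act_coordinate:
  assumes d: "d \<ge> 1" and i: "i \<in> {1..d}"
    and prox: "proximal_pair (maxdist_d d dist) UNIV (Gd_act d T Ti) z z'"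
  shows "proximal_pair dist UNIV (zit T Ti) (z i) (z' i)"
proof -
  have "\<exists>n. dist (zit T Ti n (z i)) (zit T Ti n (z' i)) < e" if "e > 0" for e
  proof -
    obtain a b where "maxdist_d d dist (Gd_act d T Ti (a, b) z) (Gd_act d T Ti (a, b) z') < e"
      using prox \<open>e > 0\<close> by (subst (asm) proximal_pair_iff) (auto simp: maxdist_d_nonneg[OF d])
    then have "dist (zit T Ti (a + int i * b) (z i)) (zit T Ti (a + int i * b) (z' i)) < e"
      using i by (simp add: maxdist_d_less_iff[OF d] Gd_act_apply)
    then show ?thesis
      by blast
  qed
  then show ?thesis
    by (subst proximal_pair_iff) auto
qed

lemma proximal_pair_Gd_act_if_simultaneously_proximal:
  assumes d: "d \<ge> 1" and prox: "simultaneously_proximal (zit T Ti) {1..d} z z'"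
  shows "proximal_pair (maxdist_d d dist) UNIV (Gd_act d T Ti) z z'"
proof -
  have "\<exists>g. maxdist_d d dist (Gd_act d T Ti g z) (Gd_act d T Ti g z') < e" if "e > 0" for e
  proof -
    obtain n where "\<forall>i\<in>{1..d}. dist (zit T Ti n (z i)) (zit T Ti n (z' i)) < e"
      using prox \<open>e > 0\<close> unfolding simultaneously_proximal_def by blast
    then have "maxdist_d d dist (Gd_act d T Ti (n, 0) z) (Gd_act d T Ti (n, 0) z') < e"
      by (simp add: maxdist_d_less_iff[OF d] Gd_act_apply)
    then show ?thesis
      by blast
  qed
  then show ?thesis
    by (subst proximal_pair_iff) (auto simp: maxdist_d_nonneg[OF d])
qed

lemma almost_one_one_prod_map:
  assumes Z: "Z \<subseteq> PiE {1..d} (\<lambda>_. X)" and diagonal: "\<And>x. x \<in> X \<Longrightarrow> (\<lambda>i\<in>{1..d}. x) \<in> Z"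
    and "almost_one_one X \<pi>"
  shows "almost_one_one Z (prod_map d \<pi>)"
proof -
  obtain x0 where x0: "x0 \<in> X" and singleton: "\<And>x. x \<in> X \<Longrightarrow> \<pi> x = \<pi> x0 \<Longrightarrow> x = x0"
    using assms(3) unfolding almost_one_one_def by blast
  have "z = (\<lambda>i\<in>{1..d}. x0)"
    if z: "z \<in> Z" and fibre: "prod_map d \<pi> z = prod_map d \<pi> (\<lambda>i\<in>{1..d}. x0)" for z
  proof (rule extensionalityI[of _ "{1..d}"])
    have "z \<in> PiE {1..d} (\<lambda>_. X)"
      using z Z by blast
    then show "z \<in> extensional {1..d}"
      by (simp add: PiE_iff)
    fix i
    assume i: "i \<in> {1..d}"
    then have "\<pi> (z i) = \<pi> x0"
      using fun_cong[OF fibre, of i] by (simp add: prod_map_apply)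
    moreover have "z i \<in> X"
      using z Z i by (meson PiE_mem subsetD)
    ultimately show "z i = (\<lambda>i\<in>{1..d}. x0) i"
      using singleton i by simp
  qed simp
  then show ?thesis
    unfolding almost_one_one_def using diagonal[OF x0] by blast
qed

lemma distal_ext_prod_map:
  assumes d: "d \<ge> 1" and Z: "Z \<subseteq> PiE {1..d} (\<lambda>_. X)"
    and distal: "distal_ext dist X UNIV (zit T Ti) \<pi>"
  shows "distal_ext (maxdist_d d dist) Z UNIV (Gd_act d T Ti) (prod_map d \<pi>)"
  unfolding distal_ext_def
proof (intro ballI impI notI)
  fix z z'
  assume z: "z \<in> Z" and z': "z' \<in> Z"
    and fibre: "prod_map d \<pi> z = prod_map d \<pi> z' \<and> z \<noteq> z'"
    and prox: "proximal_pair (maxdist_d d dist) UNIV (Gd_act d T Ti) z z'"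
  have "z \<in> PiE {1..d} (\<lambda>_. X)" "z' \<in> PiE {1..d} (\<lambda>_. X)"
    using z z' Z by blast+
  then obtain i where i: "i \<in> {1..d}" and "z i \<noteq> z' i"
    using fibre by (blast intro: PiE_ext)
  moreover have "\<pi> (z i) = \<pi> (z' i)"
    using fun_cong[OF conjunct1[OF fibre], of i] i by (simp add: prod_map_apply)
  moreover have "z i \<in> X" "z' i \<in> X"
    using z z' Z i by (meson PiE_mem subsetD)+
  ultimately show False
    using distal proximal_pair_Gd_act_coordinate[OF d i prox] unfolding distal_ext_def by blast
qed

lemma dist_zit_le_SUP:
  assumes "bounded X" and h: "homeomorphism X X T Ti" and "x \<in> X" and "x' \<in> X"
  shows "dist (zit T Ti n x) (zit T Ti n x') \<le> (SUP m. dist (zit T Ti m x) (zit T Ti m x'))"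
proof (rule cSUP_upper)
  obtain B where "\<And>y y'. y \<in> X \<Longrightarrow> y' \<in> X \<Longrightarrow> dist y y' \<le> B"
    using \<open>bounded X\<close> unfolding bounded_two_points by blast
  then show "bdd_above (range (\<lambda>m. dist (zit T Ti m x) (zit T Ti m x')))"
    using zit_in[OF h] assms(3,4) by (intro bdd_aboveI2) blast
qed simp

lemma equicont_ext_prod_map:
  assumes d: "d \<ge> 1" and "bounded X" and h: "homeomorphism X X T Ti"
    and Z: "Z \<subseteq> PiE {1..d} (\<lambda>_. X)"
    and equicont: "equicont_ext dist X UNIV (zit T Ti) \<pi>"
  shows "equicont_ext (maxdist_d d dist) Z UNIV (Gd_act d T Ti) (prod_map d \<pi>)"
  unfolding equicont_ext_def
proof (intro allI impI)
  fix e :: real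
  assume "e > 0"
  obtain \<delta> where "\<delta> > 0" and \<delta>: "\<forall>x\<in>X. \<forall>x'\<in>X. \<pi> x = \<pi> x' \<and> dist x x' < \<delta> \<longrightarrow>
      (SUP n. dist (zit T Ti n x) (zit T Ti n x')) < e / 2"
    using equicont \<open>e > 0\<close> unfolding equicont_ext_def by (meson half_gt_zero)
  have "(SUP g. maxdist_d d dist (Gd_act d T Ti g z) (Gd_act d T Ti g z')) < e"
    if z: "z \<in> Z" and z': "z' \<in> Z"
      and close: "prod_map d \<pi> z = prod_map d \<pi> z' \<and> maxdist_d d dist z z' < \<delta>" for z z'
  proof -
    have "dist (Gd_act d T Ti (a, b) z i) (Gd_act d T Ti (a, b) z' i) \<le> e / 2"
      if i: "i \<in> {1..d}" for a b i
    proof -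
      have zi: "z i \<in> X" "z' i \<in> X"
        using z z' Z i by (meson PiE_mem subsetD)+
      moreover have "\<pi> (z i) = \<pi> (z' i)"
        using fun_cong[OF conjunct1[OF close], of i] i by (simp add: prod_map_apply)
      moreover have "dist (z i) (z' i) < \<delta>"
        using conjunct2[OF close] i by (simp add: maxdist_d_less_iff[OF d])
      ultimately have "(SUP n. dist (zit T Ti n (z i)) (zit T Ti n (z' i))) < e / 2"
        using \<delta> by blast
      then show ?thesis
        using dist_zit_le_SUP[OF \<open>bounded X\<close> h zi, of "a + int i * b"] i
        by (simp add: Gd_act_apply)
    qed
    then have "maxdist_d d dist (Gd_act d T Ti (a, b) z) (Gd_act d T Ti (a, b) z') \<le> e / 2" for a b
      unfolding maxdist_d_le_iff[OF d] by blast
    then have "(SUP g. maxdist_d d dist (Gd_act d T Ti g z) (Gd_act d T Ti g z')) \<le> e / 2"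
      by (intro cSUP_least) (auto simp: split_paired_all)
    with \<open>e > 0\<close> show ?thesis
      by linarith
  qed
  with \<open>\<delta> > 0\<close> show "\<exists>\<delta>>0. \<forall>z\<in>Z. \<forall>z'\<in>Z. prod_map d \<pi> z = prod_map d \<pi> z' \<and> maxdist_d d dist z z' < \<delta> \<longrightarrow>
      (SUP g. maxdist_d d dist (Gd_act d T Ti g z) (Gd_act d T Ti g z')) < e"
    by blast
qed

section \<open>Factor maps of compact systems\<close>

lemma cont_wrt_dist_iff: "cont_wrt dist dist X f \<longleftrightarrow> continuous_on X f"
  unfolding cont_wrt_def continuous_on_iff by (metis dist_commute)

locale factor_map =
  fixes X :: "'a::metric_space set" and TX TXi :: "'a \<Rightarrow> 'a"
    and TY TYi :: "'b::metric_space \<Rightarrow> 'b" and \<pi> :: "'a \<Rightarrow> 'b"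
  assumes compact_X: "compact X"
    and homeomorphism_X: "homeomorphism X X TX TXi"
    and continuous_\<pi>: "continuous_on X \<pi>"
    and \<pi>_zit: "\<And>n x. x \<in> X \<Longrightarrow> \<pi> (zit TX TXi n x) = zit TY TYi n (\<pi> x)"
begin

lemma same_fibre_limit:
  assumes "\<And>k. x k \<in> X \<and> x' k \<in> X \<and> \<pi> (x k) = \<pi> (x' k)"
    and "x \<longlonglongrightarrow> l" and "x' \<longlonglongrightarrow> l'" and "l \<in> X" and "l' \<in> X"
  shows "\<pi> l = \<pi> l'"
proof -
  have "(\<lambda>k. \<pi> (x k)) \<longlonglongrightarrow> \<pi> l"
    using assms(1,2,4) by (intro continuous_on_tendsto_compose[OF continuous_\<pi>]) auto
  moreover have "(\<lambda>k. \<pi> (x' k)) \<longlonglongrightarrow> \<pi> l'"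
    using assms(1,3,5) by (intro continuous_on_tendsto_compose[OF continuous_\<pi>]) auto
  moreover have "(\<lambda>k. \<pi> (x k)) = (\<lambda>k. \<pi> (x' k))"
    using assms(1) by simp
  ultimately show ?thesis
    using LIMSEQ_unique by metis
qed

lemma fibre_pairs_convergent_subseq:
  fixes N :: "nat \<Rightarrow> int"
  assumes S: "finite S" and fibre: "\<And>i. i \<in> S \<Longrightarrow> z i \<in> X \<and> z' i \<in> X \<and> \<pi> (z i) = \<pi> (z' i)"
  shows "\<exists>r u u'. strict_mono r \<and> (\<forall>i\<in>S. u i \<in> X \<and> u' i \<in> X \<and> \<pi> (u i) = \<pi> (u' i) \<and>
    (\<lambda>k. zit TX TXi (N (r k)) (z i)) \<longlonglongrightarrow> u i \<and> (\<lambda>k. zit TX TXi (N (r k)) (z' i)) \<longlonglongrightarrow> u' i)"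
proof -
  let ?T = "zit TX TXi"
  have "(?T (N k) (z i), ?T (N k) (z' i)) \<in> X \<times> X" if "i \<in> S" for k i
    using fibre[OF that] zit_in[OF homeomorphism_X] by simp
  then have "\<exists>r c. strict_mono r \<and> (\<forall>i\<in>S. c i \<in> X \<times> X \<and>
      (\<lambda>k. (?T (N (r k)) (z i), ?T (N (r k)) (z' i))) \<longlonglongrightarrow> c i)"
    by (rule compact_common_convergent_subseq[OF compact_Times[OF compact_X compact_X] S,
          of "\<lambda>k i. (?T (N k) (z i), ?T (N k) (z' i))"])
  then obtain r c where r: "strict_mono r" and c: "\<forall>i\<in>S. c i \<in> X \<times> X \<and>
      (\<lambda>k. (?T (N (r k)) (z i), ?T (N (r k)) (z' i))) \<longlonglongrightarrow> c i"
    by blast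
  define u u' where "u = (\<lambda>i. fst (c i))" and "u' = (\<lambda>i. snd (c i))"
  have u: "u i \<in> X \<and> u' i \<in> X" if "i \<in> S" for i
    using c that unfolding u_def u'_def by (auto simp: mem_Times_iff)
  have lim: "(\<lambda>k. ?T (N (r k)) (z i)) \<longlonglongrightarrow> u i \<and> (\<lambda>k. ?T (N (r k)) (z' i)) \<longlonglongrightarrow> u' i"
    if "i \<in> S" for i
  proof -
    have "(\<lambda>k. (?T (N (r k)) (z i), ?T (N (r k)) (z' i))) \<longlonglongrightarrow> c i"
      using c that by blast
    from tendsto_fst[OF this] tendsto_snd[OF this] show ?thesis
      unfolding u_def u'_def by simp
  qed
  have "\<pi> (u i) = \<pi> (u' i)" if "i \<in> S" for i
    using that fibre u lim zit_in[OF homeomorphism_X]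
    by (intro same_fibre_limit[of "\<lambda>k. ?T (N (r k)) (z i)" "\<lambda>k. ?T (N (r k)) (z' i)"])
      (auto simp: \<pi>_zit)
  with r u lim show ?thesis
    by blast
qed

lemma fibre_pairs_simultaneously_proximal:
  assumes prox: "proximal_ext dist X UNIV (zit TX TXi) \<pi>" and "finite S"
    and "\<And>i. i \<in> S \<Longrightarrow> z i \<in> X \<and> z' i \<in> X \<and> \<pi> (z i) = \<pi> (z' i)"
  shows "simultaneously_proximal (zit TX TXi) S z z'"
  using assms(2,3)
proof (induct S arbitrary: z z' rule: finite_induct)
  case empty
  then show ?case by (simp add: simultaneously_proximal_def)
next
  case (insert a S)
  let ?T = "zit TX TXi"
  have "proximal_pair dist UNIV ?T (z a) (z' a)"
    using prox insert.prems unfolding proximal_ext_def by blast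
  then have "\<forall>k. \<exists>n. dist (?T n (z a)) (?T n (z' a)) < 1 / real (Suc k)"
    by (subst (asm) proximal_pair_iff) auto
  then obtain N where N: "\<And>k. dist (?T (N k) (z a)) (?T (N k) (z' a)) < 1 / real (Suc k)"
    by metis
  from fibre_pairs_convergent_subseq[where S = "insert a S" and z = z and z' = z' and N = N,
      OF finite.insertI[OF insert.hyps(1)] insert.prems]
  obtain r u u' where r: "strict_mono r" and limits: "\<forall>i\<in>insert a S. u i \<in> X \<and> u' i \<in> X \<and>
      \<pi> (u i) = \<pi> (u' i) \<and> (\<lambda>k. ?T (N (r k)) (z i)) \<longlonglongrightarrow> u i \<and> (\<lambda>k. ?T (N (r k)) (z' i)) \<longlonglongrightarrow> u' i"
    by blast
  have u: "u i \<in> X \<and> u' i \<in> X \<and> \<pi> (u i) = \<pi> (u' i)"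
    and lim: "(\<lambda>k. ?T (N (r k)) (z i)) \<longlonglongrightarrow> u i \<and> (\<lambda>k. ?T (N (r k)) (z' i)) \<longlonglongrightarrow> u' i"
    if "i \<in> insert a S" for i
    using limits that by blast+
  have "u a = u' a"
  proof -
    have "(\<lambda>k. dist (?T (N k) (z a)) (?T (N k) (z' a))) \<longlonglongrightarrow> 0"
      using N by (intro LIMSEQ_norm_0) simp
    from LIMSEQ_subseq_LIMSEQ[OF this r]
    have "(\<lambda>k. dist (?T (N (r k)) (z a)) (?T (N (r k)) (z' a))) \<longlonglongrightarrow> 0"
      by (simp add: o_def)
    moreover have "(\<lambda>k. dist (?T (N (r k)) (z a)) (?T (N (r k)) (z' a))) \<longlonglongrightarrow> dist (u a) (u' a)"
      using lim by (auto intro: tendsto_dist)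
    ultimately show ?thesis
      using LIMSEQ_unique by fastforce
  qed
  moreover have "simultaneously_proximal ?T S u u'"
    using insert.hyps(3) u by blast
  ultimately have "simultaneously_proximal ?T (insert a S) u u'"
    unfolding simultaneously_proximal_def by auto
  then show ?case
  proof (rule simultaneously_proximal_if_orbit_limit[where X = X and N = "N \<circ> r", rotated -1])
    fix i
    assume "i \<in> insert a S"
    then show "z i \<in> X \<and> z' i \<in> X" "u i \<in> X \<and> u' i \<in> X"
      "(\<lambda>k. ?T ((N \<circ> r) k) (z i)) \<longlonglongrightarrow> u i \<and> (\<lambda>k. ?T ((N \<circ> r) k) (z' i)) \<longlonglongrightarrow> u' i"
      using insert.prems u lim by simp_all
  qed (use insert.hyps(1) zit_in[OF homeomorphism_X] continuous_on_zit[OF homeomorphism_X]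
      zit_add[OF homeomorphism_X] in auto)
qed

lemma prod_map_Nd_subset:
  assumes d: "d \<ge> 1"
  shows "prod_map d \<pi> ` Nd d X TX TXi \<subseteq> Nd d (\<pi> ` X) TY TYi"
proof
  fix w
  assume "w \<in> prod_map d \<pi> ` Nd d X TX TXi"
  then obtain z where z: "z \<in> Nd d X TX TXi" and w: "w = prod_map d \<pi> z"
    by blast
  have zX: "z i \<in> X" if "i \<in> {1..d}" for i
    using z Nd_subset_PiE that by blast
  obtain x p q where x: "\<forall>k. x k \<in> X"
    and lim: "\<forall>i\<in>{1..d}. (\<lambda>k. zit TX TXi (p k + int i * q k) (x k)) \<longlonglongrightarrow> z i"
    using z unfolding mem_Nd_iff_tendsto[OF d] by blast
  have "(\<lambda>k. zit TY TYi (p k + int i * q k) (\<pi> (x k))) \<longlonglongrightarrow> w i" if i: "i \<in> {1..d}" for i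
  proof -
    have "(\<lambda>k. \<pi> (zit TX TXi (p k + int i * q k) (x k))) \<longlonglongrightarrow> \<pi> (z i)"
      using lim i zX x zit_in[OF homeomorphism_X]
      by (intro continuous_on_tendsto_compose[OF continuous_\<pi>]) auto
    then show ?thesis
      using x i w by (simp add: \<pi>_zit prod_map_apply)
  qed
  moreover have "w \<in> PiE {1..d} (\<lambda>_. \<pi> ` X)"
    using zX w unfolding prod_map_def by auto
  ultimately show "w \<in> Nd d (\<pi> ` X) TY TYi"
    unfolding mem_Nd_iff_tendsto[OF d] using x
    by (intro conjI exI[of _ "\<lambda>k. \<pi> (x k)"] exI[of _ p] exI[of _ q]) auto
qed

lemma Nd_subset_prod_map_image:
  assumes d: "d \<ge> 1"
  shows "Nd d (\<pi> ` X) TY TYi \<subseteq> prod_map d \<pi> ` Nd d X TX TXi"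
proof
  fix y
  assume y: "y \<in> Nd d (\<pi> ` X) TY TYi"
  then obtain y0 p q where "\<forall>k. y0 k \<in> \<pi> ` X"
    and lim_y: "\<forall>i\<in>{1..d}. (\<lambda>k. zit TY TYi (p k + int i * q k) (y0 k)) \<longlonglongrightarrow> y i"
    unfolding mem_Nd_iff_tendsto[OF d] by blast
  then have "\<forall>k. \<exists>x. x \<in> X \<and> y0 k = \<pi> x"
    by blast
  then obtain x where x: "\<And>k. x k \<in> X" and y0: "\<And>k. y0 k = \<pi> (x k)"
    by metis
  define W where "W = (\<lambda>k i. zit TX TXi (p k + int i * q k) (x k))"
  have "W k i \<in> X" for k i
    using x zit_in[OF homeomorphism_X] unfolding W_def by blast
  then obtain r c where r: "strict_mono r"
    and c: "\<forall>i\<in>{1..d}. c i \<in> X \<and> (\<lambda>k. W (r k) i) \<longlonglongrightarrow> c i"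
    using compact_common_convergent_subseq[OF compact_X finite_atLeastAtMost[of 1 d], of W] by blast
  define z where "z = restrict c {1..d}"
  have zN: "z \<in> Nd d X TX TXi"
  proof -
    have "z \<in> PiE {1..d} (\<lambda>_. X)"
      using c unfolding z_def by auto
    moreover have "\<forall>i\<in>{1..d}. (\<lambda>k. zit TX TXi ((p \<circ> r) k + int i * (q \<circ> r) k) ((x \<circ> r) k)) \<longlonglongrightarrow> z i"
      using c unfolding z_def W_def by simp
    moreover have "\<forall>k. (x \<circ> r) k \<in> X"
      using x by simp
    ultimately show ?thesis
      unfolding mem_Nd_iff_tendsto[OF d] by blast
  qed
  have "\<pi> (c i) = y i" if i: "i \<in> {1..d}" for i
  proof (rule LIMSEQ_unique)
    show "(\<lambda>k. \<pi> (W (r k) i)) \<longlonglongrightarrow> \<pi> (c i)"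
      using c i \<open>\<And>k i. W k i \<in> X\<close>
      by (intro continuous_on_tendsto_compose[OF continuous_\<pi>]) auto
    have "(\<lambda>k. zit TY TYi (p k + int i * q k) (y0 k)) \<longlonglongrightarrow> y i"
      using lim_y i by blast
    from LIMSEQ_subseq_LIMSEQ[OF this r]
    have "(\<lambda>k. zit TY TYi (p (r k) + int i * q (r k)) (y0 (r k))) \<longlonglongrightarrow> y i"
      by (simp add: o_def)
    then show "(\<lambda>k. \<pi> (W (r k) i)) \<longlonglongrightarrow> y i"
      unfolding W_def y0 using x by (simp add: \<pi>_zit)
  qed
  moreover have "y \<in> extensional {1..d}"
    using y Nd_subset_PiE[of d "\<pi> ` X" TY TYi] by (auto simp: PiE_iff)
  ultimately have "prod_map d \<pi> z = y"
    unfolding prod_map_def z_def by (intro extensionalityI[of _ "{1..d}"]) auto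
  with zN show "y \<in> prod_map d \<pi> ` Nd d X TX TXi"
    by blast
qed

lemma cont_wrt_prod_map:
  assumes d: "d \<ge> 1" and Z: "Z \<subseteq> PiE {1..d} (\<lambda>_. X)"
  shows "cont_wrt (maxdist_d d dist) (maxdist_d d dist) Z (prod_map d \<pi>)"
  unfolding cont_wrt_def
proof (intro ballI allI impI)
  fix z and e :: real
  assume z: "z \<in> Z" and "e > 0"
  then obtain \<delta> where "\<delta> > 0" and \<delta>: "\<And>x x'. x \<in> X \<Longrightarrow> x' \<in> X \<Longrightarrow> dist x x' < \<delta> \<Longrightarrow> dist (\<pi> x) (\<pi> x') < e"
    using compact_uniformly_continuous[OF continuous_\<pi> compact_X]
    unfolding uniformly_continuous_on_def by (metis dist_commute)
  have "maxdist_d d dist (prod_map d \<pi> z) (prod_map d \<pi> z') < e"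
    if z': "z' \<in> Z" and close: "maxdist_d d dist z z' < \<delta>" for z'
    unfolding maxdist_d_less_iff[OF d]
  proof
    fix i
    assume i: "i \<in> {1..d}"
    have "z i \<in> X" "z' i \<in> X"
      using z z' i Z by (meson PiE_mem subsetD)+
    moreover have "dist (z i) (z' i) < \<delta>"
      using close i unfolding maxdist_d_less_iff[OF d] by blast
    ultimately show "dist (prod_map d \<pi> z i) (prod_map d \<pi> z' i) < e"
      using \<delta> i by (simp add: prod_map_apply)
  qed
  with \<open>\<delta> > 0\<close> show "\<exists>\<delta>>0. \<forall>z'\<in>Z. maxdist_d d dist z z' < \<delta> \<longrightarrow>
      maxdist_d d dist (prod_map d \<pi> z) (prod_map d \<pi> z') < e"
    by blast
qed

lemma prod_map_Gd_act:
  assumes "z \<in> PiE {1..d} (\<lambda>_. X)"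
  shows "prod_map d \<pi> (Gd_act d TX TXi g z) = Gd_act d TY TYi g (prod_map d \<pi> z)"
proof
  fix i
  show "prod_map d \<pi> (Gd_act d TX TXi g z) i = Gd_act d TY TYi g (prod_map d \<pi> z) i"
  proof (cases "i \<in> {1..d}")
    case True
    then have "z i \<in> X" using assms by (rule PiE_mem[rotated])
    with True show ?thesis
      by (cases g) (simp add: prod_map_apply Gd_act_apply \<pi>_zit)
  qed (cases g, auto simp: prod_map_def Gd_act_def)
qed

lemma is_extension_prod_map:
  assumes d: "d \<ge> 1"
  shows "is_extension (maxdist_d d dist) (maxdist_d d dist) (Nd d X TX TXi) (Nd d (\<pi> ` X) TY TYi)
    UNIV (Gd_act d TX TXi) (Gd_act d TY TYi) (prod_map d \<pi>)"
  unfolding is_extension_def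
proof (intro conjI ballI)
  show "prod_map d \<pi> ` Nd d X TX TXi = Nd d (\<pi> ` X) TY TYi"
    using prod_map_Nd_subset[OF d] Nd_subset_prod_map_image[OF d] by (rule subset_antisym)
  show "cont_wrt (maxdist_d d dist) (maxdist_d d dist) (Nd d X TX TXi) (prod_map d \<pi>)"
    by (rule cont_wrt_prod_map[OF d Nd_subset_PiE])
  fix g z
  assume "z \<in> Nd d X TX TXi"
  then show "prod_map d \<pi> (Gd_act d TX TXi g z) = Gd_act d TY TYi g (prod_map d \<pi> z)"
    using Nd_subset_PiE by (intro prod_map_Gd_act) blast
qed

lemma proximal_ext_prod_map:
  assumes d: "d \<ge> 1" and Z: "Z \<subseteq> PiE {1..d} (\<lambda>_. X)"
    and prox: "proximal_ext dist X UNIV (zit TX TXi) \<pi>"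
  shows "proximal_ext (maxdist_d d dist) Z UNIV (Gd_act d TX TXi) (prod_map d \<pi>)"
  unfolding proximal_ext_def
proof (intro ballI impI)
  fix z z'
  assume z: "z \<in> Z" and z': "z' \<in> Z" and fibre: "prod_map d \<pi> z = prod_map d \<pi> z'"
  have "z i \<in> X \<and> z' i \<in> X \<and> \<pi> (z i) = \<pi> (z' i)" if i: "i \<in> {1..d}" for i
  proof -
    have "z \<in> PiE {1..d} (\<lambda>_. X)" "z' \<in> PiE {1..d} (\<lambda>_. X)"
      using z z' Z by blast+
    then show ?thesis
      using fun_cong[OF fibre, of i] i by (auto simp: prod_map_apply PiE_iff)
  qed
  then show "proximal_pair (maxdist_d d dist) UNIV (Gd_act d TX TXi) z z'"
    by (intro proximal_pair_Gd_act_if_simultaneously_proximal[OF d]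
        fibre_pairs_simultaneously_proximal[OF prox finite_atLeastAtMost])
qed

end

theorem lemma5p5:
  fixes X :: "'a::metric_space set" and Y :: "'b::metric_space set"
    and TX TXi :: "'a \<Rightarrow> 'a" and TY TYi :: "'b \<Rightarrow> 'b"
    and \<pi> :: "'a \<Rightarrow> 'b" and d :: nat
  assumes "compact X" and "compact Y"
    and "homeomorphism X X TX TXi" and "homeomorphism Y Y TY TYi"
    and "minimal_sys dist X UNIV (zit TX TXi)"
    and "minimal_sys dist Y UNIV (zit TY TYi)"
    and "is_extension dist dist X Y UNIV (zit TX TXi) (zit TY TYi) \<pi>"
    and "d \<ge> 1"
  shows "is_extension (maxdist_d d dist) (maxdist_d d dist) (Nd d X TX TXi) (Nd d Y TY TYi)
           UNIV (Gd_act d TX TXi) (Gd_act d TY TYi) (prod_map d \<pi>)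
    \<and> (almost_one_one X \<pi> \<longrightarrow> almost_one_one (Nd d X TX TXi) (prod_map d \<pi>))
    \<and> (proximal_ext dist X UNIV (zit TX TXi) \<pi> \<longrightarrow>
         proximal_ext (maxdist_d d dist) (Nd d X TX TXi) UNIV (Gd_act d TX TXi) (prod_map d \<pi>))
    \<and> (equicont_ext dist X UNIV (zit TX TXi) \<pi> \<longrightarrow>
         equicont_ext (maxdist_d d dist) (Nd d X TX TXi) UNIV (Gd_act d TX TXi) (prod_map d \<pi>))
    \<and> (distal_ext dist X UNIV (zit TX TXi) \<pi> \<longrightarrow>
         distal_ext (maxdist_d d dist) (Nd d X TX TXi) UNIV (Gd_act d TX TXi) (prod_map d \<pi>))"
proof -
  have Y: "\<pi> ` X = Y" and "continuous_on X \<pi>"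
    and "\<And>n x. x \<in> X \<Longrightarrow> \<pi> (zit TX TXi n x) = zit TY TYi n (\<pi> x)"
    using assms(7) unfolding is_extension_def cont_wrt_dist_iff by auto
  then interpret factor_map X TX TXi TY TYi \<pi>
    using assms(1,3) by unfold_locales
  note d = assms(8) and Nd_X = Nd_subset_PiE[of d X TX TXi]
  show ?thesis
    using is_extension_prod_map[OF d]
      almost_one_one_prod_map[OF Nd_X diagonal_in_Nd[OF d]]
      proximal_ext_prod_map[OF d Nd_X]
      equicont_ext_prod_map[OF d compact_imp_bounded[OF assms(1)] assms(3) Nd_X]
      distal_ext_prod_map[OF d Nd_X]
    unfolding Y by blast
qed

end
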